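(* For all integers $n\ge1$, $m\ge3$, every prime power $q$, and every positive integer $k$, $$\Pr_{\pi,\pi'\sim\Pi_{mn}}\left[\mathrm{def}(\mathbf{A}_{\pi,\pi'})\ge k\right]\le\left(\frac{n^2}{(n/2)^{m-2}}\right)^{\frac{k-1}{2}},$$ where $\pi,\pi'$ are independent uniformly random permutations of $[mn]$.
   Context: $\Pi_{mn}$ is the set of permutations of $[mn]$. For a permutation $\pi$ of $[mn]$, $\mathbf{A}_\pi\in\mathbb{F}_q^{n\times mn}$ has $(\mathbf{A}_\pi)_{i,j}=1$ if $j\in\pi(\{m(i-1)+1,\dots,mi\})$ and $0$ otherwise. $\mathbf{A}_{\pi,\pi'}\in\mathbb{F}_q^{2n\times mn}$ is the matrix whose first $n$ rows are $\mathbf{A}_\pi$ and last $n$ rows are $\mathbf{A}_{\pi'}$, and $\mathrm{def}(\mathbf{A}_{\pi,\pi'})=2n-\mathrm{rank}(\mathbf{A}_{\pi,\pi'})$, rank over $\mathbb{F}_q$. *)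

theory Defs
  imports "HOL-Combinatorics.Permutations" "Jordan_Normal_Form.DL_Rank"
begin

text \<open>Indices are 0-based: [mn] is rendered as {0..<m*n}, row i (0-based)
  corresponds to block {m*i ..< m*(i+1)}.\<close>

definition A_mat :: "'a::field itself \<Rightarrow> nat \<Rightarrow> nat \<Rightarrow> (nat \<Rightarrow> nat) \<Rightarrow> 'a mat" where
  "A_mat ty m n \<pi> = mat n (m*n)
     (\<lambda>(i,j). if j \<in> \<pi> ` {m*i ..< m*(i+1)} then 1 else 0)"

definition A_pair :: "'a::field itself \<Rightarrow> nat \<Rightarrow> nat \<Rightarrow> (nat \<Rightarrow> nat) \<Rightarrow> (nat \<Rightarrow> nat) \<Rightarrow> 'a mat" where
  "A_pair ty m n \<pi> \<pi>' = mat (2*n) (m*n)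
     (\<lambda>(i,j). if i < n then A_mat ty m n \<pi> $$ (i,j) else A_mat ty m n \<pi>' $$ (i-n,j))"

definition deficiency :: "'a::field itself \<Rightarrow> nat \<Rightarrow> nat \<Rightarrow> (nat \<Rightarrow> nat) \<Rightarrow> (nat \<Rightarrow> nat) \<Rightarrow> nat" where
  "deficiency ty m n \<pi> \<pi>' = 2*n - vec_space.rank (2*n) (A_pair ty m n \<pi> \<pi>')"

end

theory Submission
  imports Defs
begin

text \<open>Row i of A_pi,pi' is the indicator of a block of m consecutive positions (a vertex), and
  each column x is the sum of two unit vectors: it joins the pi-block containing x to the
  pi'-block containing x. The rank of such a bipartite incidence matrix is at least the number of
  vertices minus the number of connected components, so deficiency >= k yields >= k components,
  and merging components gives a surjective colouring sigma of the top blocks with k colours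
  and a colouring tau of the bottom blocks that agree on every x.

  For a fixed sigma, the pairs (pi, pi') consistent with some tau number at most
  (mn)!^2 / C^(m-1), where C = C(sigma) is the number of colourings with the same colour class
  sizes as sigma: interleaving m such colourings gives C^m colourings with the profile of the
  blow-up of sigma, which bounds the number of consistent pi' for each pi. Class sizes >= 1
  force C >= (n/2)^((k-1)/2); and C is at least the number G of surjective colourings sharing
  the profile of sigma, so summing 1/G over sigma counts profiles, of which there are at most
  n^(k-1).\<close>

section \<open>Rank of bipartite incidence matrices\<close>

lemma card_image_merge_labels:
  fixes lab :: "'v \<Rightarrow> 'l"
  assumes "finite V" "u \<in> V" "v \<in> V" "lab u \<noteq> lab v"
  shows "card ((\<lambda>i. if lab i = lab v then lab u else lab i) ` V) + 1 = card (lab ` V)"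
proof -
  have merged: "(\<lambda>i. if lab i = lab v then lab u else lab i) ` V = lab ` V - {lab v}"
    using assms(2-4) by (auto simp: image_iff)
  have "card (lab ` V) > 0" using assms(1,3) by (auto simp: card_gt_0_iff)
  then show ?thesis unfolding merged using assms(1,3) by (simp add: card_Diff_singleton)
qed

context vec_space begin

lemma bipartite_incidence_column_not_in_span:
  fixes A :: "'a mat" and a b lab :: "nat \<Rightarrow> nat" and h N :: nat
  assumes A: "A \<in> carrier_mat n N"
    and col: "\<And>x i. x < N \<Longrightarrow> i < n \<Longrightarrow>
                A $$ (i,x) = (if i = a x then 1 else 0) + (if i = b x then 1 else 0)"
    and ab: "\<And>x. x < N \<Longrightarrow> a x < h \<and> h \<le> b x \<and> b x < n"
    and U: "U \<subseteq> col A ` X" and X: "X \<subseteq> {0..<N}"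
    and X_within: "\<And>x. x \<in> X \<Longrightarrow> lab (a x) = lab (b x)"
    and t: "t < N" and t_across: "lab (a t) \<noteq> lab (b t)"
  shows "col A t \<notin> span U"
proof
  assume "col A t \<in> span U"
  then obtain c B where B: "col A t = lincomb c B" "finite B" "B \<subseteq> U" by (meson in_spanE)
  have B_carrier: "B \<subseteq> carrier_vec n" using B U X A by (force intro: col_carrier_vec)
  \<comment> \<open>Sum of the entries in the label class of a t, with sign +1 above row h and -1 below:
      it vanishes on every column inside a class, but is 1 on column t.\<close>
  define g :: "nat \<Rightarrow> 'a" where "g i = (if lab i = lab (a t) then if i < h then 1 else -1 else 0)" for i
  define \<phi> where "\<phi> u = (\<Sum>i\<in>{0..<n}. g i * u $ i)" for u :: "'a vec"
  have \<phi>_col: "\<phi> (col A x) = g (a x) + g (b x)" if "x < N" for x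
  proof -
    have "\<phi> (col A x) = (\<Sum>i\<in>{0..<n}. (if i = a x then g i else 0) + (if i = b x then g i else 0))"
      unfolding \<phi>_def using that A col by (intro sum.cong) (auto simp: col_def)
    also have "\<dots> = g (a x) + g (b x)" using ab[OF that] by (simp add: sum.distrib)
    finally show ?thesis .
  qed
  have \<phi>_U: "\<phi> u = 0" if "u \<in> U" for u
  proof -
    obtain x where x: "x \<in> X" "u = col A x" using U \<open>u \<in> U\<close> by auto
    then show ?thesis using \<phi>_col[of x] X_within[OF x(1)] ab[of x] X unfolding g_def by auto
  qed
  have "\<phi> (lincomb c B) = (\<Sum>i\<in>{0..<n}. g i * (\<Sum>u\<in>B. c u * u $ i))"
    unfolding \<phi>_def using lincomb_index[OF _ B_carrier] by (intro sum.cong) auto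
  also have "\<dots> = (\<Sum>u\<in>B. c u * \<phi> u)"
    unfolding \<phi>_def sum_distrib_left by (subst sum.swap) (auto intro!: sum.cong simp: ac_simps)
  also have "\<dots> = 0" using \<phi>_U B by (intro sum.neutral) (metis mult_zero_right subsetD)
  finally show False
    using B(1) \<phi>_col[OF t] t_across ab[OF t] unfolding g_def by auto
qed


lemma bipartite_incidence_indpt_columns:
  fixes A :: "'a mat" and a b :: "nat \<Rightarrow> nat" and h N :: nat
  assumes A: "A \<in> carrier_mat n N"
    and col: "\<And>x i. x < N \<Longrightarrow> i < n \<Longrightarrow>
                A $$ (i,x) = (if i = a x then 1 else 0) + (if i = b x then 1 else 0)"
    and ab: "\<And>x. x < N \<Longrightarrow> a x < h \<and> h \<le> b x \<and> b x < n"
  shows "t \<le> N \<Longrightarrow> \<exists>(lab :: nat \<Rightarrow> nat) U. U \<subseteq> col A ` {0..<t} \<and> lin_indpt U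
            \<and> (\<forall>x<t. lab (a x) = lab (b x)) \<and> card U + card (lab ` {0..<n}) = n"
proof (induction t)
  case 0
  have "lin_indpt {}" unfolding lin_dep_def by auto
  then show ?case by (intro exI[of _ id] exI[of _ "{}"]) auto
next
  case (Suc t)
  then obtain lab :: "nat \<Rightarrow> nat" and U where U: "U \<subseteq> col A ` {0..<t}" and indpt: "lin_indpt U"
    and within: "\<forall>x<t. lab (a x) = lab (b x)" and card_U: "card U + card (lab ` {0..<n}) = n"
    by auto
  have t: "t < N" using Suc by auto
  show ?case
  proof (cases "lab (a t) = lab (b t)")
    case True
    then show ?thesis using U indpt within card_U by (intro exI[of _ lab] exI[of _ U]) (auto simp: less_Suc_eq)
  next
    case False
    \<comment> \<open>Column t joins two label classes: keep it and merge the classes.\<close>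
    define lab' where "lab' i = (if lab i = lab (b t) then lab (a t) else lab i)" for i
    have U_carrier: "U \<subseteq> carrier_vec n" using U A t by (force intro: col_carrier_vec)
    have not_span: "col A t \<notin> span U"
      using bipartite_incidence_column_not_in_span[OF A col ab U, of lab t] within t False by auto
    then have not_in: "col A t \<notin> U" using in_own_span[OF U_carrier] by auto
    have "lin_indpt (U \<union> {col A t})"
      using lin_dep_iff_in_span[OF U_carrier indpt _ not_in] not_span A t by auto
    moreover have "card (U \<union> {col A t}) = card U + 1"
      using not_in finite_subset[OF U] by auto
    moreover have "card (lab' ` {0..<n}) + 1 = card (lab ` {0..<n})"
      unfolding lab'_def using ab[OF t] False by (intro card_image_merge_labels) auto
    moreover have "\<forall>x<Suc t. lab' (a x) = lab' (b x)"
      using within False unfolding lab'_def by (auto simp: less_Suc_eq)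
    ultimately show ?thesis using U card_U
      by (intro exI[of _ lab'] exI[of _ "U \<union> {col A t}"]) auto
  qed
qed

lemma bipartite_incidence_rank:
  fixes A :: "'a mat" and a b :: "nat \<Rightarrow> nat" and h N :: nat
  assumes A: "A \<in> carrier_mat n N"
    and col: "\<And>x i. x < N \<Longrightarrow> i < n \<Longrightarrow>
                A $$ (i,x) = (if i = a x then 1 else 0) + (if i = b x then 1 else 0)"
    and ab: "\<And>x. x < N \<Longrightarrow> a x < h \<and> h \<le> b x \<and> b x < n"
  shows "\<exists>lab :: nat \<Rightarrow> nat. (\<forall>x<N. lab (a x) = lab (b x)) \<and> n \<le> rank A + card (lab ` {0..<n})"
proof -
  obtain lab :: "nat \<Rightarrow> nat" and U where U: "U \<subseteq> col A ` {0..<N}" and indpt: "lin_indpt U"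
    and within: "\<forall>x<N. lab (a x) = lab (b x)" and card_U: "card U + card (lab ` {0..<n}) = n"
    using bipartite_incidence_indpt_columns[OF A col ab, of N] by auto
  have "U \<subseteq> set (cols A)" using U A by (auto simp: cols_def)
  then have "card U \<le> rank A" using rank_ge_card_indpt[OF A _ indpt] by auto
  then have "n \<le> rank A + card (lab ` {0..<n})" using card_U by linarith
  with within show ?thesis by blast
qed

end

section \<open>Deficiency and colourings of blocks\<close>

text \<open>Plain inv denotes the group inverse of HOL-Algebra in this context.\<close>

abbreviation finv :: "('x \<Rightarrow> 'y) \<Rightarrow> 'y \<Rightarrow> 'x" where
  "finv \<equiv> Hilbert_Choice.inv"

lemma in_block_iff_div:
  assumes "(m::nat) > 0"
  shows "y \<in> {m*i..<m*(i+1)} \<longleftrightarrow> y div m = i"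
proof
  assume "y \<in> {m*i..<m*(i+1)}"
  then obtain r where "y = m*i + r" "r < m" by (metis add_diff_inverse_nat atLeastLessThan_iff
      add_less_cancel_left distrib_left mult.right_neutral not_less)
  then show "y div m = i" using assms by simp
next
  assume "y div m = i"
  moreover have "m * (y div m) \<le> y" by simp
  moreover have "y < m + m * (y div m)" using dividend_less_times_div[OF assms] .
  ultimately show "y \<in> {m*i..<m*(i+1)}" by auto
qed

lemma permutes_image_block_iff:
  assumes "(m::nat) > 0" and "p permutes S"
  shows "x \<in> p ` {m*i..<m*(i+1)} \<longleftrightarrow> finv p x div m = i"
proof -
  have "x \<in> p ` {m*i..<m*(i+1)} \<longleftrightarrow> finv p x \<in> {m*i..<m*(i+1)}"
    using permutes_inverses[OF assms(2)] by (metis image_iff)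
  then show ?thesis using in_block_iff_div[OF assms(1)] by simp
qed

lemma perm_block_lt:
  fixes p :: "nat \<Rightarrow> nat"
  assumes "p permutes {0..<m*n}" and "x < m*n"
  shows "finv p x div m < n"
  using permutes_nat_inv_less[of p "m*n" x] assms by (simp add: less_mult_imp_div_less mult.commute)

lemma A_pair_carrier: "A_pair ty m n \<pi> \<pi>' \<in> carrier_mat (2*n) (m*n)"
  unfolding A_pair_def by simp

lemma A_pair_entry:
  fixes ty :: "'a::field itself"
  assumes m: "m > 0" and \<pi>: "\<pi> permutes {0..<m*n}" and \<pi>': "\<pi>' permutes {0..<m*n}"
    and x: "x < m*n" and i: "i < 2*n"
  shows "A_pair ty m n \<pi> \<pi>' $$ (i,x)
           = (if i = finv \<pi> x div m then 1 else 0) + (if i = n + finv \<pi>' x div m then (1::'a) else 0)"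
proof (cases "i < n")
  case True
  then show ?thesis
    using i x permutes_image_block_iff[OF m \<pi>] by (auto simp: A_pair_def A_mat_def)
next
  case False
  then show ?thesis
    using i x permutes_image_block_iff[OF m \<pi>'] perm_block_lt[OF \<pi> x]
    by (auto simp: A_pair_def A_mat_def)
qed

lemma ex_surj_onto_interval:
  fixes L :: "'l set"
  assumes "finite L" and "1 \<le> k" and "k \<le> card L"
  shows "\<exists>h :: 'l \<Rightarrow> nat. h ` L = {0..<k}"
proof -
  obtain e where e: "bij_betw e L {0..<card L}" using ex_bij_betw_finite_nat[OF assms(1)] by blast
  have "(\<lambda>l. min (e l) (k - 1)) ` L = {0..<k}"
  proof
    show "(\<lambda>l. min (e l) (k - 1)) ` L \<subseteq> {0..<k}" using assms(2) by auto
    show "{0..<k} \<subseteq> (\<lambda>l. min (e l) (k - 1)) ` L"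
    proof
      fix j assume "j \<in> {0..<k}"
      then obtain l where "l \<in> L" "e l = j"
        using e assms(3) by (metis atLeastLessThan_iff bij_betw_def imageE less_le_trans)
      then show "j \<in> (\<lambda>l. min (e l) (k - 1)) ` L" using \<open>j \<in> {0..<k}\<close> by force
    qed
  qed
  then show ?thesis by blast
qed

definition surj_colourings :: "nat \<Rightarrow> nat \<Rightarrow> (nat \<Rightarrow> nat) set" where
  "surj_colourings n k = {\<sigma> \<in> {0..<n} \<rightarrow>\<^sub>E {0..<k}. \<sigma> ` {0..<n} = {0..<k}}"

lemma deficiency_imp_consistent_colouring:
  fixes ty :: "'a::field itself"
  assumes m: "m > 0" and \<pi>: "\<pi> permutes {0..<m*n}" and \<pi>': "\<pi>' permutes {0..<m*n}"
    and def: "deficiency ty m n \<pi> \<pi>' \<ge> k" and k: "k \<ge> 1"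
  shows "\<exists>\<sigma>\<in>surj_colourings n k. \<exists>\<tau>\<in>{0..<n} \<rightarrow>\<^sub>E {0..<k}.
           \<forall>x<m*n. \<sigma> (finv \<pi> x div m) = \<tau> (finv \<pi>' x div m)"
proof -
  define a where "a x = finv \<pi> x div m" for x
  define b where "b x = n + finv \<pi>' x div m" for x
  have ab: "a x < n \<and> n \<le> b x \<and> b x < 2*n" if "x < m*n" for x
    using perm_block_lt[OF \<pi> that] perm_block_lt[OF \<pi>' that] unfolding a_def b_def by auto
  obtain lab :: "nat \<Rightarrow> nat" where edge: "\<forall>x<m*n. lab (a x) = lab (b x)"
    and rank: "2*n \<le> vec_space.rank (2*n) (A_pair ty m n \<pi> \<pi>') + card (lab ` {0..<2*n})"
    using vec_space.bipartite_incidence_rank[OF A_pair_carrier, where a = a and b = b and h = n]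
      A_pair_entry[OF m \<pi> \<pi>'] ab
    unfolding a_def b_def by blast
  have bottom: "lab (n + i) \<in> lab ` {0..<n}" if "i < n" for i
  proof -
    define x where "x = \<pi>' (m * i)"
    have "m * i < m * n" using that m by simp
    then have x: "x < m*n" unfolding x_def using permutes_in_image[OF \<pi>'] by simp
    have "b x = n + i" unfolding x_def b_def using permutes_inverses(2)[OF \<pi>'] m by simp
    then show ?thesis using edge ab[OF x] x by (metis atLeastLessThan_iff imageI zero_le)
  qed
  have labels: "lab ` {0..<2*n} = lab ` {0..<n}"
  proof
    show "lab ` {0..<2*n} \<subseteq> lab ` {0..<n}"
    proof (rule image_subsetI)
      fix j assume "j \<in> {0..<2*n}"
      then show "lab j \<in> lab ` {0..<n}"
        using bottom[of "j - n"] by (cases "j < n") auto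
    qed
  qed auto
  then have "k \<le> card (lab ` {0..<n})" using def rank unfolding deficiency_def labels by linarith
  then obtain h :: "nat \<Rightarrow> nat" where h: "h ` lab ` {0..<n} = {0..<k}"
    using ex_surj_onto_interval k by blast
  define \<sigma> where "\<sigma> = restrict (\<lambda>i. h (lab i)) {0..<n}"
  define \<tau> where "\<tau> = restrict (\<lambda>i. h (lab (n + i))) {0..<n}"
  have "\<sigma> \<in> surj_colourings n k"
    using h unfolding surj_colourings_def \<sigma>_def by (auto simp: image_image)
  moreover have "\<tau> \<in> {0..<n} \<rightarrow>\<^sub>E {0..<k}" using h bottom unfolding \<tau>_def by auto
  moreover have "\<forall>x<m*n. \<sigma> (finv \<pi> x div m) = \<tau> (finv \<pi>' x div m)"
    using edge ab unfolding \<sigma>_def \<tau>_def a_def b_def by auto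
  ultimately show ?thesis by (intro bexI)
qed

section \<open>Permutations transporting one colouring to another\<close>

definition transporting_perms :: "'x set \<Rightarrow> ('x \<Rightarrow> 'l) \<Rightarrow> ('x \<Rightarrow> 'l) \<Rightarrow> ('x \<Rightarrow> 'x) set" where
  "transporting_perms S c d = {\<rho>. \<rho> permutes S \<and> (\<forall>y\<in>S. d (\<rho> y) = c y)}"

abbreviation class_size :: "('x \<Rightarrow> 'l) \<Rightarrow> 'x set \<Rightarrow> 'l \<Rightarrow> nat" where
  "class_size c S l \<equiv> card {y\<in>S. c y = l}"

lemma finite_transporting_perms: "finite S \<Longrightarrow> finite (transporting_perms S c d)"
  unfolding transporting_perms_def by (rule finite_subset[OF _ finite_permutations[of S]]) auto

lemma transporting_perms_class_size_eq:
  assumes "\<rho> \<in> transporting_perms S c d"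
  shows "class_size c S l = class_size d S l"
proof -
  have \<rho>: "\<rho> permutes S" and transport: "\<forall>y\<in>S. d (\<rho> y) = c y"
    using assms by (auto simp: transporting_perms_def)
  have "\<rho> ` {y\<in>S. c y = l} = {y\<in>S. d y = l}"
  proof
    show "\<rho> ` {y\<in>S. c y = l} \<subseteq> {y\<in>S. d y = l}"
      using transport \<rho> by (auto simp: permutes_in_image)
    show "{y\<in>S. d y = l} \<subseteq> \<rho> ` {y\<in>S. c y = l}"
    proof
      fix z assume z: "z \<in> {y\<in>S. d y = l}"
      then have "finv \<rho> z \<in> S" "\<rho> (finv \<rho> z) = z"
        using permutes_inverses(1)[OF \<rho>] permutes_in_image[OF permutes_inv[OF \<rho>]] by auto
      then show "z \<in> \<rho> ` {y\<in>S. c y = l}" using transport z by (metis (mono_tags) image_eqI mem_Collect_eq)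
    qed
  qed
  then show ?thesis using card_image[OF permutes_inj_on[OF \<rho>]] by metis
qed

lemma transporting_perms_eq_empty:
  assumes "class_size c S l \<noteq> class_size d S l"
  shows "transporting_perms S c d = {}"
proof (rule equals0I)
  fix \<rho> assume "\<rho> \<in> transporting_perms S c d"
  from transporting_perms_class_size_eq[OF this] assms show False by simp
qed

lemma inj_on_transpose_comp:
  assumes "a \<notin> S"
  shows "inj_on (\<lambda>(b, p). transpose a b \<circ> p) (UNIV \<times> {p. p permutes S})"
proof (rule inj_onI, clarsimp)
  fix b p b' p'
  assume p: "p permutes S" and p': "p' permutes S" and eq: "transpose a b \<circ> p = transpose a b' \<circ> p'"
  have "p a = a" "p' a = a" using p p' assms by (auto simp: permutes_not_in)
  then have "b = b'" using fun_cong[OF eq, of a] by simp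
  then have "transpose a b \<circ> (transpose a b \<circ> p) = transpose a b \<circ> (transpose a b \<circ> p')"
    using eq by simp
  then show "b = b' \<and> p = p'" using \<open>b = b'\<close> by (simp add: o_assoc)
qed

text \<open>A permutation of insert a S is a permutation of S followed by the transposition
  of a with its image b.\<close>

lemma transporting_perms_insert:
  assumes "a \<notin> S"
  shows "transporting_perms (insert a S) c d
           = (\<lambda>(b, p). transpose a b \<circ> p) `
               (SIGMA b:{b\<in>insert a S. d b = c a}. transporting_perms S c (d \<circ> transpose a b))"
    (is "?T = ?g ` ?Sig")
proof
  show "?T \<subseteq> ?g ` ?Sig"
  proof
    fix \<rho> assume "\<rho> \<in> ?T"
    then have \<rho>: "\<rho> permutes insert a S" and transport: "\<forall>y\<in>insert a S. d (\<rho> y) = c y"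
      by (auto simp: transporting_perms_def)
    define p where "p = transpose a (\<rho> a) \<circ> \<rho>"
    have "\<rho> a \<in> insert a S" using \<rho> by (metis insertI1 permutes_in_image)
    moreover have "p \<in> transporting_perms S c (d \<circ> transpose a (\<rho> a))"
      using permutes_insert_lemma[OF \<rho>] transport unfolding transporting_perms_def p_def by auto
    moreover have "\<rho> = ?g (\<rho> a, p)" unfolding p_def by (auto simp: fun_eq_iff)
    ultimately show "\<rho> \<in> ?g ` ?Sig" using transport by (intro image_eqI[of _ _ "(\<rho> a, p)"]) auto
  qed
  show "?g ` ?Sig \<subseteq> ?T"
  proof
    fix \<rho> assume "\<rho> \<in> ?g ` ?Sig"
    then obtain b p where b: "b \<in> insert a S" "d b = c a"
      and p: "p \<in> transporting_perms S c (d \<circ> transpose a b)" and \<rho>: "\<rho> = transpose a b \<circ> p"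
      by auto
    have p_perm: "p permutes S" using p by (simp add: transporting_perms_def)
    then have "p a = a" using assms by (simp add: permutes_not_in)
    moreover have "\<rho> permutes insert a S" unfolding \<rho>
      using permutes_subset[OF p_perm] b(1) by (intro permutes_compose permutes_swap_id) auto
    ultimately show "\<rho> \<in> ?T" using p b unfolding \<rho> by (auto simp: transporting_perms_def)
  qed
qed

lemma card_transporting_perms_insert:
  assumes "finite S" and "a \<notin> S"
  shows "card (transporting_perms (insert a S) c d)
           = (\<Sum>b\<in>{b\<in>insert a S. d b = c a}. card (transporting_perms S c (d \<circ> transpose a b)))"
proof -
  have "inj_on (\<lambda>(b, p). transpose a b \<circ> p)
          (SIGMA b:{b\<in>insert a S. d b = c a}. transporting_perms S c (d \<circ> transpose a b))"
    by (rule inj_on_subset[OF inj_on_transpose_comp[OF assms(2)]])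
      (auto simp: transporting_perms_def)
  then show ?thesis unfolding transporting_perms_insert[OF assms(2)]
    using assms(1) by (simp add: card_image card_SigmaI finite_transporting_perms)
qed

lemma class_size_comp_transpose:
  assumes "finite S" and "a \<notin> S" and "b \<in> insert a S"
  shows "class_size (d \<circ> transpose a b) S l = class_size d (insert a S) l - (if d b = l then 1 else 0)"
proof -
  have "transpose a b ` {y\<in>S. (d \<circ> transpose a b) y = l} = {z\<in>insert a S - {b}. d z = l}"
  proof
    show "transpose a b ` {y\<in>S. (d \<circ> transpose a b) y = l} \<subseteq> {z\<in>insert a S - {b}. d z = l}"
      using assms by (auto simp: transpose_def)
    show "{z\<in>insert a S - {b}. d z = l} \<subseteq> transpose a b ` {y\<in>S. (d \<circ> transpose a b) y = l}"
    proof
      fix z assume z: "z \<in> {z\<in>insert a S - {b}. d z = l}"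
      then have "transpose a b z \<in> S" using assms(3) by (auto simp: transpose_def)
      then show "z \<in> transpose a b ` {y\<in>S. (d \<circ> transpose a b) y = l}"
        using z by (auto intro: image_eqI[of _ _ "transpose a b z"])
    qed
  qed
  then have "class_size (d \<circ> transpose a b) S l = card {z\<in>insert a S - {b}. d z = l}"
    by (metis (no_types, lifting) card_image inj_on_transpose)
  also have "{z\<in>insert a S - {b}. d z = l} = {y\<in>insert a S. d y = l} - (if d b = l then {b} else {})"
    by auto
  finally show ?thesis using assms by (auto simp: card_Diff_singleton)
qed

lemma prod_fact_class_size_insert:
  assumes "finite S" "a \<notin> S" "finite L" "c a \<in> L"
  shows "(class_size c S (c a) + 1) * (\<Prod>l\<in>L. fact (class_size c S l))
           = (\<Prod>l\<in>L. fact (class_size c (insert a S) l) :: nat)"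
proof -
  have grown: "class_size c (insert a S) (c a) = class_size c S (c a) + 1"
  proof -
    have "{y\<in>insert a S. c y = c a} = insert a {y\<in>S. c y = c a}" by auto
    then show ?thesis using assms(1,2) by simp
  qed
  have same: "class_size c (insert a S) l = class_size c S l" if "l \<noteq> c a" for l
  proof -
    have "{y\<in>insert a S. c y = l} = {y\<in>S. c y = l}" using that by auto
    then show ?thesis by simp
  qed
  have "(\<Prod>l\<in>L. fact (class_size c (insert a S) l) :: nat)
          = fact (class_size c S (c a) + 1) * (\<Prod>l\<in>L - {c a}. fact (class_size c S l))"
    using assms(3,4) grown same by (simp add: prod.remove)
  also have "\<dots> = (class_size c S (c a) + 1) * (\<Prod>l\<in>L. fact (class_size c S l))"
    using assms(3,4) by (simp add: prod.remove algebra_simps)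
  finally show ?thesis ..
qed

lemma card_transporting_perms:
  assumes "finite S" "finite L" "c ` S \<subseteq> L" "d ` S \<subseteq> L"
    and "\<forall>l\<in>L. class_size c S l = class_size d S l"
  shows "card (transporting_perms S c d) = (\<Prod>l\<in>L. fact (class_size c S l))"
  using assms(1,3-5)
proof (induction S arbitrary: d rule: finite_induct)
  case empty
  have "transporting_perms {} c d = {id}" by (auto simp: transporting_perms_def)
  then show ?case by simp
next
  case (insert a S)
  let ?B = "{b\<in>insert a S. d b = c a}"
  have ca: "c a \<in> L" using insert.prems(1) by auto
  have card_B: "card ?B = class_size c S (c a) + 1"
  proof -
    have "card ?B = class_size c (insert a S) (c a)" using insert.prems(3) ca by auto
    also have "{y\<in>insert a S. c y = c a} = insert a {y\<in>S. c y = c a}" by auto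
    finally show ?thesis using insert.hyps by simp
  qed
  have each: "card (transporting_perms S c (d \<circ> transpose a b)) = (\<Prod>l\<in>L. fact (class_size c S l))"
    if b: "b \<in> ?B" for b
  proof (rule insert.IH)
    show "c ` S \<subseteq> L" using insert.prems(1) by auto
    have "transpose a b ` S \<subseteq> insert a S" using b by (auto simp: transpose_def)
    then show "(d \<circ> transpose a b) ` S \<subseteq> L"
      using insert.prems(2) by (metis image_comp image_mono order_trans)
    have "class_size c S l = class_size c (insert a S) l - (if c a = l then 1 else 0)" for l
    proof -
      have "{y\<in>insert a S. c y = l} = (if c a = l then insert a {y\<in>S. c y = l} else {y\<in>S. c y = l})"
        by auto
      then show ?thesis using insert.hyps by auto
    qed
    then show "\<forall>l\<in>L. class_size c S l = class_size (d \<circ> transpose a b) S l"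
      using class_size_comp_transpose[OF insert.hyps, of b d] b insert.prems(3) by auto
  qed
  have "card (transporting_perms (insert a S) c d)
          = (\<Sum>b\<in>?B. card (transporting_perms S c (d \<circ> transpose a b)))"
    by (rule card_transporting_perms_insert[OF insert.hyps])
  also have "\<dots> = card ?B * (\<Prod>l\<in>L. fact (class_size c S l))" using each by simp
  also have "\<dots> = (\<Prod>l\<in>L. fact (class_size c (insert a S) l))"
    unfolding card_B by (rule prod_fact_class_size_insert[where c = c, OF insert.hyps assms(2) ca])
  finally show ?case .
qed

lemma card_transporting_perms_le:
  assumes "finite S" "finite L" "c ` S \<subseteq> L" "d ` S \<subseteq> L"
  shows "card (transporting_perms S c d) \<le> (\<Prod>l\<in>L. fact (class_size c S l))"
proof (cases "\<forall>l\<in>L. class_size c S l = class_size d S l")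
  case True
  then show ?thesis using card_transporting_perms[OF assms] by simp
next
  case False
  then obtain l where "class_size c S l \<noteq> class_size d S l" by blast
  then have "transporting_perms S c d = {}" by (rule transporting_perms_eq_empty)
  then show ?thesis by simp
qed

section \<open>Colourings with a given profile\<close>

lemma block_index_lt:
  fixes i j m n :: nat
  assumes "j < m" and "i < n"
  shows "i*m + j < m*n"
proof -
  have "i*m + j < (i+1)*m" using assms(1) by simp
  also have "\<dots> \<le> n*m" using assms(2) by (intro mult_right_mono) auto
  finally show ?thesis by (simp add: mult.commute)
qed

lemma card_blocks_sum:
  fixes m n :: nat
  assumes m: "m > 0"
  shows "card {y\<in>{0..<m*n}. P (y mod m) (y div m)} = (\<Sum>j<m. card {i\<in>{0..<n}. P j i})"
proof -
  let ?h = "\<lambda>(j,i). i*m + j"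
  let ?Sig = "SIGMA j:{..<m}. {i\<in>{0..<n}. P j i}"
  have "{y\<in>{0..<m*n}. P (y mod m) (y div m)} = ?h ` ?Sig"
  proof
    show "{y\<in>{0..<m*n}. P (y mod m) (y div m)} \<subseteq> ?h ` ?Sig"
    proof
      fix y assume y: "y \<in> {y\<in>{0..<m*n}. P (y mod m) (y div m)}"
      then have "y div m < n" by (auto simp: less_mult_imp_div_less mult.commute)
      then show "y \<in> ?h ` ?Sig" using y m by (intro image_eqI[of _ _ "(y mod m, y div m)"]) auto
    qed
    show "?h ` ?Sig \<subseteq> {y\<in>{0..<m*n}. P (y mod m) (y div m)}"
      using block_index_lt by auto
  qed
  moreover have "inj_on ?h ?Sig"
  proof (rule inj_onI, clarsimp)
    fix j i j' i' assume "j < m" "j' < m" "i*m + j = i'*m + j'"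
    then show "j = j' \<and> i = i'" by (metis add.commute div_mult_self1 less_not_refl2 mod_mult_self1
      mod_less m bot_nat_0.not_eq_extremum div_less add_0)
  qed
  ultimately show ?thesis by (simp add: card_image)
qed

lemma class_size_blowup:
  fixes m n :: nat
  assumes "m > 0"
  shows "class_size (\<lambda>y. f (y div m)) {0..<m*n} l = m * class_size f {0..<n} l"
  using card_blocks_sum[OF assms, where P = "\<lambda>j i. f i = l" and n = n] by simp

definition same_profile :: "'x set \<Rightarrow> 'l set \<Rightarrow> ('x \<Rightarrow> 'l) \<Rightarrow> ('x \<Rightarrow> 'l) set" where
  "same_profile S L e0 = {e \<in> S \<rightarrow>\<^sub>E L. \<forall>l\<in>L. class_size e S l = class_size e0 S l}"

lemma finite_same_profile: "finite S \<Longrightarrow> finite L \<Longrightarrow> finite (same_profile S L e0)"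
  unfolding same_profile_def by (rule finite_subset[OF _ finite_PiE]) auto

lemma self_in_same_profile: "e0 \<in> S \<rightarrow>\<^sub>E L \<Longrightarrow> e0 \<in> same_profile S L e0"
  unfolding same_profile_def by auto

text \<open>Every permutation \<rho> of S transports e0 \<circ> \<rho> to e0, so the permutations of S are
  partitioned according to the colouring they transport to e0.\<close>

lemma card_same_profile_mult_prod_fact:
  assumes S: "finite S" and L: "finite L" and e0: "e0 \<in> S \<rightarrow>\<^sub>E L"
  shows "card (same_profile S L e0) * (\<Prod>l\<in>L. fact (class_size e0 S l)) = fact (card S)"
proof -
  let ?C = "same_profile S L e0"
  have perms: "{\<rho>. \<rho> permutes S} = (\<Union>e\<in>?C. transporting_perms S e e0)"
  proof
    show "{\<rho>. \<rho> permutes S} \<subseteq> (\<Union>e\<in>?C. transporting_perms S e e0)"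
    proof
      fix \<rho> assume "\<rho> \<in> {\<rho>. \<rho> permutes S}"
      then have \<rho>: "\<rho> permutes S" by simp
      define e where "e = restrict (e0 \<circ> \<rho>) S"
      have transp: "\<rho> \<in> transporting_perms S e e0" using \<rho> unfolding transporting_perms_def e_def by auto
      have "e \<in> S \<rightarrow>\<^sub>E L" using e0 permutes_in_image[OF \<rho>] unfolding e_def by auto
      then have "e \<in> ?C"
        using transporting_perms_class_size_eq[OF transp] unfolding same_profile_def by auto
      then show "\<rho> \<in> (\<Union>e\<in>?C. transporting_perms S e e0)" using transp by auto
    qed
  qed (auto simp: transporting_perms_def)
  have disjoint: "transporting_perms S e e0 \<inter> transporting_perms S e' e0 = {}"
    if "e \<in> ?C" "e' \<in> ?C" "e \<noteq> e'" for e e'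
  proof (rule equals0I)
    fix \<rho> assume "\<rho> \<in> transporting_perms S e e0 \<inter> transporting_perms S e' e0"
    then have "\<forall>y\<in>S. e y = e' y" unfolding transporting_perms_def by auto
    then show False using that unfolding same_profile_def by (metis (no_types, lifting) PiE_ext mem_Collect_eq)
  qed
  have each: "card (transporting_perms S e e0) = (\<Prod>l\<in>L. fact (class_size e0 S l))" if "e \<in> ?C" for e
  proof -
    have e: "e \<in> S \<rightarrow>\<^sub>E L" and sizes: "\<forall>l\<in>L. class_size e S l = class_size e0 S l"
      using that unfolding same_profile_def by auto
    have "card (transporting_perms S e e0) = (\<Prod>l\<in>L. fact (class_size e S l))"
      by (rule card_transporting_perms[OF S L]) (use e e0 sizes in auto)
    also have "\<dots> = (\<Prod>l\<in>L. fact (class_size e0 S l))" using sizes by (intro prod.cong) auto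
    finally show ?thesis .
  qed
  have "fact (card S) = card {\<rho>. \<rho> permutes S}" by (rule card_permutations[symmetric, OF refl S])
  also have "\<dots> = (\<Sum>e\<in>?C. card (transporting_perms S e e0))" unfolding perms
    by (rule card_UN_disjoint) (use S L disjoint in \<open>auto simp: finite_same_profile finite_transporting_perms\<close>)
  also have "\<dots> = card ?C * (\<Prod>l\<in>L. fact (class_size e0 S l))" using each by simp
  finally show ?thesis by simp
qed

lemma interleave_in_same_profile:
  fixes m n k :: nat
  assumes m: "m > 0" and F: "\<And>j. j < m \<Longrightarrow> F j \<in> same_profile {0..<n} {0..<k} \<sigma>"
  shows "restrict (\<lambda>y. F (y mod m) (y div m)) {0..<m*n}
           \<in> same_profile {0..<m*n} {0..<k} (restrict (\<lambda>y. \<sigma> (y div m)) {0..<m*n})"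
proof -
  have "F (y mod m) (y div m) \<in> {0..<k}" if "y < m*n" for y
    using F[of "y mod m"] m that unfolding same_profile_def
    by (auto simp: less_mult_imp_div_less mult.commute)
  moreover have "class_size (restrict (\<lambda>y. F (y mod m) (y div m)) {0..<m*n}) {0..<m*n} l
                   = class_size (restrict (\<lambda>y. \<sigma> (y div m)) {0..<m*n}) {0..<m*n} l"
    if "l \<in> {0..<k}" for l
  proof -
    have "class_size (restrict (\<lambda>y. F (y mod m) (y div m)) {0..<m*n}) {0..<m*n} l
            = (\<Sum>j<m. class_size (F j) {0..<n} l)"
      using card_blocks_sum[OF m, where P = "\<lambda>j i. F j i = l" and n = n]
      by (simp cong: conj_cong)
    also have "\<dots> = (\<Sum>j<m. class_size \<sigma> {0..<n} l)"
      using F that unfolding same_profile_def by (intro sum.cong) auto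
    also have "\<dots> = m * class_size \<sigma> {0..<n} l" by simp
    also have "\<dots> = class_size (\<lambda>y. \<sigma> (y div m)) {0..<m*n} l" by (rule class_size_blowup[OF m, symmetric])
    finally show ?thesis by (simp cong: conj_cong)
  qed
  ultimately show ?thesis unfolding same_profile_def by auto
qed

lemma card_same_profile_pow_le_blowup:
  fixes m n k :: nat
  assumes m: "m > 0"
  shows "card (same_profile {0..<n} {0..<k} \<sigma>) ^ m
           \<le> card (same_profile {0..<m*n} {0..<k} (restrict (\<lambda>y. \<sigma> (y div m)) {0..<m*n}))"
proof -
  let ?C = "same_profile {0..<n} {0..<k} \<sigma>"
  let ?interleave = "\<lambda>F. restrict (\<lambda>y. F (y mod m) (y div m)) {0..<m*n}"
  have "inj_on ?interleave (PiE {..<m} (\<lambda>_. ?C))"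
  proof (rule inj_onI)
    fix F G assume F: "F \<in> PiE {..<m} (\<lambda>_. ?C)" and G: "G \<in> PiE {..<m} (\<lambda>_. ?C)"
      and eq: "?interleave F = ?interleave G"
    show "F = G"
    proof (rule PiE_ext[OF F G])
      fix j assume j: "j \<in> {..<m}"
      then have "F j \<in> {0..<n} \<rightarrow>\<^sub>E {0..<k}" "G j \<in> {0..<n} \<rightarrow>\<^sub>E {0..<k}"
        using F G unfolding same_profile_def by auto
      then show "F j = G j"
      proof (rule PiE_ext)
        fix i assume "i \<in> {0..<n}"
        then have "i*m + j < m*n" using j block_index_lt by auto
        then show "F j i = G j i" using fun_cong[OF eq, of "i*m + j"] j by simp
      qed
    qed
  qed
  then have "card ?C ^ m = card (?interleave ` PiE {..<m} (\<lambda>_. ?C))"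
    by (simp add: card_image card_PiE)
  also have "\<dots> \<le> card (same_profile {0..<m*n} {0..<k} (restrict (\<lambda>y. \<sigma> (y div m)) {0..<m*n}))"
    using interleave_in_same_profile[OF m]
    by (intro card_mono) (auto simp: finite_same_profile PiE_iff)
  finally show ?thesis .
qed

section \<open>Factorial estimates and the size of profile classes\<close>

lemma fact_mult_fact_le:
  fixes a b :: nat
  assumes "a \<ge> 1" "b \<ge> 1"
  shows "fact a * fact b \<le> (fact (a + b - 1) :: nat)"
  using assms(2)
proof (induction b)
  case (Suc b)
  show ?case
  proof (cases "b = 0")
    case False
    then have IH: "fact a * fact b \<le> (fact (a + b - 1) :: nat)" using Suc by simp
    have "fact a * fact (Suc b) = Suc b * (fact a * fact b)" by (simp add: algebra_simps)
    also have "\<dots> \<le> (a + b) * fact (a + b - 1)"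
      using IH assms(1) by (intro mult_le_mono) auto
    also have "\<dots> = fact (a + Suc b - 1)"
      using assms(1) by (simp add: fact_reduce[of "a + b"])
    finally show ?thesis .
  qed (use assms in simp)
qed simp

lemma prod_fact_le_fact:
  fixes s :: "'l \<Rightarrow> nat"
  assumes "finite L" "L \<noteq> {}" "\<forall>l\<in>L. s l \<ge> 1"
  shows "(\<Prod>l\<in>L. fact (s l)) \<le> (fact (sum s L + 1 - card L) :: nat)"
  using assms
proof (induction L rule: finite_ne_induct)
  case (insert x F)
  have "card F \<le> sum s F" using insert.prems sum_mono[of F "\<lambda>_. 1" s] by auto
  have "(\<Prod>l\<in>insert x F. fact (s l)) = (fact (s x) * (\<Prod>l\<in>F. fact (s l)) :: nat)"
    using insert by simp
  also have "\<dots> \<le> fact (s x) * fact (sum s F + 1 - card F)"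
    using insert.IH insert.prems by (intro mult_le_mono2) simp
  also have "\<dots> \<le> fact (s x + (sum s F + 1 - card F) - 1)"
    using insert.prems \<open>card F \<le> sum s F\<close> by (intro fact_mult_fact_le) auto
  also have "s x + (sum s F + 1 - card F) - 1 = sum s (insert x F) + 1 - card (insert x F)"
    using insert \<open>card F \<le> sum s F\<close> by simp
  finally show ?case .
qed simp

lemma fact_mult_falling_prod:
  fixes n j :: nat
  assumes "j \<le> n"
  shows "fact (n - j) * (\<Prod>i<j. n - i) = (fact n :: nat)"
  using assms
proof (induction j)
  case (Suc j)
  have "n - j = Suc (n - Suc j)" using Suc.prems by simp
  then have "fact (n - Suc j) * (\<Prod>i<Suc j. n - i) = fact (n - j) * (\<Prod>i<j. n - i)"
    by (simp add: algebra_simps)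
  then show ?case using Suc by simp
qed simp

text \<open>Pair the i-th factor with the (j-1-i)-th: both are at least 2 and they sum to at least n + 2,
  so their product is at least n.\<close>

lemma power_le_falling_prod_square:
  fixes n j :: nat
  assumes "j < n"
  shows "n ^ j \<le> (\<Prod>i<j. n - i) ^ 2"
proof -
  have "(\<Prod>i<j. n - i) = (\<Prod>i<j. n - (j - Suc i))"
    by (rule prod.nat_diff_reindex[where g="\<lambda>i. n - i", symmetric])
  then have "(\<Prod>i<j. n - i) ^ 2 = (\<Prod>i<j. (n - i) * (n - (j - Suc i)))"
    by (simp add: power2_eq_square prod.distrib)
  also have "(\<Prod>i<j. n) \<le> \<dots>"
  proof (rule prod_mono)
    fix i assume "i \<in> {..<j}"
    define x where "x = n - i"
    define y where "y = n - (j - Suc i)"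
    have "x \<ge> 2" "y \<ge> 2" "x + y \<ge> n + 2" using \<open>i \<in> {..<j}\<close> assms unfolding x_def y_def by auto
    moreover have "x * y = x * (y - 1) + x" using \<open>y \<ge> 2\<close> by (cases y) (auto simp: algebra_simps)
    moreover have "x * (y - 1) \<ge> 2 * (y - 1)" using \<open>x \<ge> 2\<close> by (intro mult_right_mono) auto
    ultimately have "n \<le> x * y" by linarith
    then show "0 \<le> n \<and> n \<le> (n - i) * (n - (j - Suc i))" unfolding x_def y_def by simp
  qed
  finally show ?thesis by simp
qed

lemma surj_colouring_class_sizes:
  assumes \<sigma>: "\<sigma> \<in> surj_colourings n k"
  shows "\<And>l. l < k \<Longrightarrow> 1 \<le> class_size \<sigma> {0..<n} l \<and> class_size \<sigma> {0..<n} l \<le> n"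
    and "(\<Sum>l\<in>{0..<k}. class_size \<sigma> {0..<n} l) = n"
    and "k \<le> n"
proof -
  have img: "\<sigma> ` {0..<n} = {0..<k}" using \<sigma> unfolding surj_colourings_def by auto
  show "1 \<le> class_size \<sigma> {0..<n} l \<and> class_size \<sigma> {0..<n} l \<le> n" if "l < k" for l
  proof
    have "l \<in> \<sigma> ` {0..<n}" using img that by simp
    then have "{i\<in>{0..<n}. \<sigma> i = l} \<noteq> {}" by auto
    then show "1 \<le> class_size \<sigma> {0..<n} l" by (simp add: Suc_le_eq card_gt_0_iff)
    have "{i\<in>{0..<n}. \<sigma> i = l} \<subseteq> {0..<n}" by auto
    from card_mono[OF _ this] show "class_size \<sigma> {0..<n} l \<le> n" by simp
  qed
  show "(\<Sum>l\<in>{0..<k}. class_size \<sigma> {0..<n} l) = n"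
    using sum_fun_comp[of "{0..<n}" "{0..<k}" \<sigma> "\<lambda>_. 1::nat"] img by simp
  show "k \<le> n" using card_image_le[of "{0..<n}" \<sigma>] img by simp
qed

text \<open>With class sizes at least 1 summing to n, the multinomial coefficient n! / \<Prod>l. (class size)!
  is at least n! / (n - k + 1)!, a falling factorial of length k - 1 whose square is at least
  n^(k - 1).\<close>

lemma falling_prod_le_card_same_profile:
  assumes \<sigma>: "\<sigma> \<in> surj_colourings n k" and k: "k \<ge> 1"
  shows "(\<Prod>i<k-1. n - i) \<le> card (same_profile {0..<n} {0..<k} \<sigma>)"
proof -
  let ?C = "card (same_profile {0..<n} {0..<k} \<sigma>)"
  have kn: "k \<le> n" by (rule surj_colouring_class_sizes(3)[OF \<sigma>])
  have "\<sigma> \<in> {0..<n} \<rightarrow>\<^sub>E {0..<k}" using \<sigma> unfolding surj_colourings_def by simp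
  then have multinomial: "?C * (\<Prod>l\<in>{0..<k}. fact (class_size \<sigma> {0..<n} l)) = fact n"
    using card_same_profile_mult_prod_fact[of "{0..<n}" "{0..<k}" \<sigma>] by simp
  have prod_le: "(\<Prod>l\<in>{0..<k}. fact (class_size \<sigma> {0..<n} l)) \<le> (fact (n - (k - 1)) :: nat)"
  proof -
    have "\<forall>l\<in>{0..<k}. 1 \<le> class_size \<sigma> {0..<n} l" using surj_colouring_class_sizes(1)[OF \<sigma>] by auto
    then have "(\<Prod>l\<in>{0..<k}. fact (class_size \<sigma> {0..<n} l))
                 \<le> (fact ((\<Sum>l\<in>{0..<k}. class_size \<sigma> {0..<n} l) + 1 - card {0..<k}) :: nat)"
      using k by (intro prod_fact_le_fact) auto
    also have "(\<Sum>l\<in>{0..<k}. class_size \<sigma> {0..<n} l) + 1 - card {0..<k} = n - (k - 1)"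
      using surj_colouring_class_sizes(2)[OF \<sigma>] k kn by simp
    finally show ?thesis .
  qed
  have "fact (n - (k - 1)) * (\<Prod>i<k-1. n - i) = fact n"
    by (rule fact_mult_falling_prod) (use kn in simp)
  also have "\<dots> = ?C * (\<Prod>l\<in>{0..<k}. fact (class_size \<sigma> {0..<n} l))" by (rule multinomial[symmetric])
  also have "\<dots> \<le> ?C * fact (n - (k - 1))" using prod_le by (rule mult_le_mono2)
  finally show ?thesis by (simp add: mult.commute[of ?C])
qed

lemma card_same_profile_lower:
  assumes \<sigma>: "\<sigma> \<in> surj_colourings n k" and k: "k \<ge> 1"
  shows "(real n / 2) powr ((real k - 1) / 2) \<le> real (card (same_profile {0..<n} {0..<k} \<sigma>))"
proof -
  let ?C = "card (same_profile {0..<n} {0..<k} \<sigma>)"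
  define falling where "falling = (\<Prod>i<k-1. n - i)"
  have kn: "k \<le> n" by (rule surj_colouring_class_sizes(3)[OF \<sigma>])
  have falling_le: "falling \<le> ?C" unfolding falling_def by (rule falling_prod_le_card_same_profile[OF \<sigma> k])
  have "real n > 0" using kn k by simp
  have exponent: "real 2 * ((real k - 1) / 2) = real (k - 1)" using k by (simp add: of_nat_diff)
  have "(real n powr ((real k - 1) / 2)) ^ 2 = real n powr (real 2 * ((real k - 1) / 2))"
    using \<open>real n > 0\<close> by (intro powr_power) simp
  also have "\<dots> = real n ^ (k - 1)" unfolding exponent using \<open>real n > 0\<close> by (rule powr_realpow)
  also have "\<dots> \<le> real falling ^ 2"
  proof -
    have "n ^ (k - 1) \<le> falling ^ 2"
      unfolding falling_def by (rule power_le_falling_prod_square) (use kn k in simp)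
    then show ?thesis by (metis of_nat_le_iff of_nat_power)
  qed
  finally have "real n powr ((real k - 1) / 2) \<le> real falling"
    by (rule power2_le_imp_le) simp
  moreover have "(real n / 2) powr ((real k - 1) / 2) \<le> real n powr ((real k - 1) / 2)"
    using k \<open>real n > 0\<close> by (intro powr_mono2) auto
  moreover have "real falling \<le> real ?C" using falling_le by simp
  ultimately show ?thesis by linarith
qed

section \<open>Counting consistent pairs\<close>

definition profile :: "nat \<Rightarrow> nat \<Rightarrow> (nat \<Rightarrow> nat) \<Rightarrow> nat \<Rightarrow> nat" where
  "profile n k \<sigma> = restrict (class_size \<sigma> {0..<n}) {0..<k}"

definition consistent_pairs :: "nat \<Rightarrow> nat \<Rightarrow> (nat \<Rightarrow> nat) \<Rightarrow> (nat \<Rightarrow> nat)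
                                  \<Rightarrow> ((nat \<Rightarrow> nat) \<times> (nat \<Rightarrow> nat)) set" where
  "consistent_pairs m n \<sigma> \<tau> = {(\<pi>, \<pi>'). \<pi> permutes {0..<m*n} \<and> \<pi>' permutes {0..<m*n} \<and>
      (\<forall>x<m*n. \<sigma> (finv \<pi> x div m) = \<tau> (finv \<pi>' x div m))}"

lemma profile_eq_imp_same_profile:
  assumes "\<sigma>' \<in> surj_colourings n k" and "profile n k \<sigma>' = profile n k \<sigma>"
  shows "\<sigma>' \<in> same_profile {0..<n} {0..<k} \<sigma>"
proof -
  have "class_size \<sigma>' {0..<n} l = class_size \<sigma> {0..<n} l" if "l \<in> {0..<k}" for l
    using fun_cong[OF assms(2), of l] that unfolding profile_def by simp
  then show ?thesis using assms(1) unfolding same_profile_def surj_colourings_def by simp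
qed

lemma class_size_comp_finv:
  assumes "p permutes S"
  shows "class_size (\<lambda>x. f (finv p x)) S l = class_size f S l"
proof -
  have "finv p \<in> transporting_perms S (\<lambda>x. f (finv p x)) f"
    unfolding transporting_perms_def using permutes_inv[OF assms] by auto
  then show ?thesis by (rule transporting_perms_class_size_eq)
qed

text \<open>For fixed \<pi>, the \<pi>' consistent with (\<sigma>, \<tau>) correspond, via inversion, to permutations of
  {0..<m*n} transporting the colouring x \<mapsto> \<sigma> (finv \<pi> x div m) to y \<mapsto> \<tau> (y div m).\<close>

lemma card_consistent_partners_le:
  fixes m n k :: nat
  assumes m: "m > 0" and \<sigma>: "\<sigma> \<in> {0..<n} \<rightarrow>\<^sub>E {0..<k}" and \<tau>: "\<tau> \<in> {0..<n} \<rightarrow>\<^sub>E {0..<k}"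
    and \<pi>: "\<pi> permutes {0..<m*n}"
  shows "card {\<pi>'. \<pi>' permutes {0..<m*n} \<and> (\<forall>x<m*n. \<sigma> (finv \<pi> x div m) = \<tau> (finv \<pi>' x div m))}
           \<le> (if \<tau> \<in> same_profile {0..<n} {0..<k} \<sigma>
               then \<Prod>l\<in>{0..<k}. fact (m * class_size \<sigma> {0..<n} l) else 0)"
proof -
  let ?N = "m*n"
  define Q where "Q = {\<pi>'. \<pi>' permutes {0..<?N} \<and> (\<forall>x<?N. \<sigma> (finv \<pi> x div m) = \<tau> (finv \<pi>' x div m))}"
  define c where "c x = \<sigma> (finv \<pi> x div m)" for x
  define d where "d y = \<tau> (y div m)" for y
  have "inj_on finv Q"
    using inv_inj_on_permutes[of "{0..<?N}"] unfolding Q_def by (rule inj_on_subset) auto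
  moreover have "finv ` Q \<subseteq> transporting_perms {0..<?N} c d"
    unfolding Q_def transporting_perms_def c_def d_def using permutes_inv permutes_inverses(1) by fastforce
  ultimately have Q_le: "card Q \<le> card (transporting_perms {0..<?N} c d)"
    by (metis card_image card_mono finite_atLeastLessThan finite_transporting_perms)
  have c: "c ` {0..<?N} \<subseteq> {0..<k}" and d: "d ` {0..<?N} \<subseteq> {0..<k}"
    using \<sigma> \<tau> perm_block_lt[OF \<pi>] m unfolding c_def d_def
    by (auto simp: less_mult_imp_div_less mult.commute)
  have c_sizes: "class_size c {0..<?N} l = m * class_size \<sigma> {0..<n} l" for l
    unfolding c_def using class_size_comp_finv[OF \<pi>, of "\<lambda>y. \<sigma> (y div m)"]
      class_size_blowup[OF m] by simp
  have d_sizes: "class_size d {0..<?N} l = m * class_size \<tau> {0..<n} l" for l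
    unfolding d_def by (rule class_size_blowup[OF m])
  show ?thesis
  proof (cases "\<tau> \<in> same_profile {0..<n} {0..<k} \<sigma>")
    case True
    have "card (transporting_perms {0..<?N} c d) \<le> (\<Prod>l\<in>{0..<k}. fact (class_size c {0..<?N} l))"
      by (rule card_transporting_perms_le) (use c d in auto)
    then show ?thesis using Q_le True unfolding c_sizes Q_def by simp
  next
    case False
    then obtain l where "class_size \<tau> {0..<n} l \<noteq> class_size \<sigma> {0..<n} l"
      using \<tau> unfolding same_profile_def by auto
    then have "class_size c {0..<?N} l \<noteq> class_size d {0..<?N} l"
      unfolding c_sizes d_sizes using m by simp
    then have "transporting_perms {0..<?N} c d = {}" by (rule transporting_perms_eq_empty)
    then show ?thesis using Q_le unfolding Q_def by simp
  qed
qed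

lemma card_consistent_pairs_le:
  fixes m n k :: nat
  assumes m: "m > 0" and \<sigma>: "\<sigma> \<in> {0..<n} \<rightarrow>\<^sub>E {0..<k}" and \<tau>: "\<tau> \<in> {0..<n} \<rightarrow>\<^sub>E {0..<k}"
  shows "card (consistent_pairs m n \<sigma> \<tau>)
           \<le> (if \<tau> \<in> same_profile {0..<n} {0..<k} \<sigma>
               then fact (m*n) * (\<Prod>l\<in>{0..<k}. fact (m * class_size \<sigma> {0..<n} l)) else 0)"
proof -
  let ?N = "m*n"
  define Q where "Q \<pi> = {\<pi>'. \<pi>' permutes {0..<?N} \<and> (\<forall>x<?N. \<sigma> (finv \<pi> x div m) = \<tau> (finv \<pi>' x div m))}" for \<pi>
  define R where "R = (if \<tau> \<in> same_profile {0..<n} {0..<k} \<sigma>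
                        then (\<Prod>l\<in>{0..<k}. fact (m * class_size \<sigma> {0..<n} l)) else (0::nat))"
  have "consistent_pairs m n \<sigma> \<tau> = Sigma {\<pi>. \<pi> permutes {0..<?N}} Q"
    unfolding consistent_pairs_def Q_def by auto
  moreover have "finite (Q \<pi>)" for \<pi>
    unfolding Q_def by (rule finite_subset[OF _ finite_permutations[of "{0..<?N}"]]) auto
  ultimately have "card (consistent_pairs m n \<sigma> \<tau>) = (\<Sum>\<pi>\<in>{\<pi>. \<pi> permutes {0..<?N}}. card (Q \<pi>))"
    by (simp add: card_SigmaI finite_permutations)
  also have "\<dots> \<le> (\<Sum>\<pi>\<in>{\<pi>. \<pi> permutes {0..<?N}}. R)"
    using card_consistent_partners_le[OF m \<sigma> \<tau>] unfolding Q_def R_def by (intro sum_mono) auto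
  also have "\<dots> = fact ?N * R" using card_permutations[of "{0..<?N}" ?N] by simp
  finally show ?thesis unfolding R_def by (simp split: if_splits)
qed

text \<open>Summing over the \<tau> with the profile of \<sigma> gives C * (mn)! * P, where C counts these \<tau>;
  the multinomial identity for the blow-up of \<sigma> gives P = (mn)! / D with D \<ge> C^m.\<close>

lemma sum_card_consistent_pairs_le:
  fixes m n k :: nat
  assumes m: "m > 0" and \<sigma>: "\<sigma> \<in> {0..<n} \<rightarrow>\<^sub>E {0..<k}"
  shows "real (\<Sum>\<tau>\<in>{0..<n} \<rightarrow>\<^sub>E {0..<k}. card (consistent_pairs m n \<sigma> \<tau>))
           \<le> real (fact (m*n))^2 / real (card (same_profile {0..<n} {0..<k} \<sigma>))^(m-1)"
proof -
  let ?C = "same_profile {0..<n} {0..<k} \<sigma>"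
  let ?blowup = "restrict (\<lambda>y. \<sigma> (y div m)) {0..<m*n}"
  let ?D = "same_profile {0..<m*n} {0..<k} ?blowup"
  define P :: nat where "P = (\<Prod>l\<in>{0..<k}. fact (m * class_size \<sigma> {0..<n} l))"
  have "(\<Sum>\<tau>\<in>{0..<n} \<rightarrow>\<^sub>E {0..<k}. card (consistent_pairs m n \<sigma> \<tau>))
          \<le> (\<Sum>\<tau>\<in>{0..<n} \<rightarrow>\<^sub>E {0..<k}. if \<tau> \<in> ?C then fact (m*n) * P else 0)"
    using card_consistent_pairs_le[OF m \<sigma>] unfolding P_def by (intro sum_mono) auto
  also have "\<dots> = card ?C * (fact (m*n) * P)"
  proof -
    have "(\<Sum>\<tau>\<in>{0..<n} \<rightarrow>\<^sub>E {0..<k}. if \<tau> \<in> ?C then fact (m*n) * P else 0)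
            = (\<Sum>\<tau>\<in>({0..<n} \<rightarrow>\<^sub>E {0..<k}) \<inter> ?C. fact (m*n) * P)"
      by (rule sum.inter_restrict[symmetric]) (simp add: finite_PiE)
    also have "({0..<n} \<rightarrow>\<^sub>E {0..<k}) \<inter> ?C = ?C" unfolding same_profile_def by auto
    finally show ?thesis by simp
  qed
  finally have sum_le: "(\<Sum>\<tau>\<in>{0..<n} \<rightarrow>\<^sub>E {0..<k}. card (consistent_pairs m n \<sigma> \<tau>))
                         \<le> card ?C * (fact (m*n) * P)" .
  have "?blowup \<in> {0..<m*n} \<rightarrow>\<^sub>E {0..<k}"
    using \<sigma> m by (auto simp: less_mult_imp_div_less mult.commute)
  moreover have "class_size ?blowup {0..<m*n} l = m * class_size \<sigma> {0..<n} l" for l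
  proof -
    have "{y\<in>{0..<m*n}. ?blowup y = l} = {y\<in>{0..<m*n}. \<sigma> (y div m) = l}" by auto
    then show ?thesis using class_size_blowup[OF m, where f = \<sigma> and n = n and l = l] by simp
  qed
  ultimately have DP: "card ?D * P = fact (m*n)"
    using card_same_profile_mult_prod_fact[of "{0..<m*n}" "{0..<k}" ?blowup] unfolding P_def by simp
  have CD: "card ?C ^ m \<le> card ?D" by (rule card_same_profile_pow_le_blowup[OF m])
  have "card ?C \<ge> 1"
    using self_in_same_profile[OF \<sigma>] finite_same_profile[of "{0..<n}" "{0..<k}" \<sigma>]
    by (auto simp: Suc_le_eq card_gt_0_iff)
  define c where "c = real (card ?C)"
  define d where "d = real (card ?D)"
  define f where "f = real (fact (m*n) :: nat)"
  have c: "c \<ge> 1" using \<open>card ?C \<ge> 1\<close> unfolding c_def by simp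
  have cd: "c ^ m \<le> d" using CD unfolding c_def d_def by (metis of_nat_le_iff of_nat_power)
  moreover have "c ^ m \<ge> 1" using c by (rule one_le_power)
  ultimately have d: "d > 0" by linarith
  have P: "real P = f / d" using DP d unfolding d_def f_def by (simp add: field_simps flip: of_nat_mult)
  have "real (\<Sum>\<tau>\<in>{0..<n} \<rightarrow>\<^sub>E {0..<k}. card (consistent_pairs m n \<sigma> \<tau>))
          \<le> real (card ?C * (fact (m*n) * P))"
    using sum_le by (simp only: of_nat_le_iff)
  also have "\<dots> = c * f * f / d" unfolding c_def f_def using P f_def by simp
  also have "\<dots> \<le> c * f * f / c ^ m"
    using c cd d by (intro divide_left_mono) (auto simp: f_def)
  also have "\<dots> = f ^ 2 / c ^ (m - 1)"
    using c m by (cases m) (auto simp: power2_eq_square)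
  finally show ?thesis unfolding f_def c_def .
qed

lemma sum_inverse_card_fibres:
  assumes "finite S"
  shows "(\<Sum>x\<in>S. 1 / real (card {y\<in>S. g y = g x})) = real (card (g ` S))"
proof -
  have "(\<Sum>x\<in>S. 1 / real (card {y\<in>S. g y = g x}))
          = (\<Sum>v\<in>g ` S. \<Sum>x\<in>{x\<in>S. g x = v}. 1 / real (card {y\<in>S. g y = g x}))"
    by (rule sum.image_gen[OF assms])
  also have "\<dots> = (\<Sum>v\<in>g ` S. 1)"
  proof (rule sum.cong[OF refl])
    fix v assume "v \<in> g ` S"
    then have "{x\<in>S. g x = v} \<noteq> {}" by auto
    moreover have "(\<Sum>x\<in>{x\<in>S. g x = v}. 1 / real (card {y\<in>S. g y = g x}))
                     = (\<Sum>x\<in>{x\<in>S. g x = v}. 1 / real (card {x\<in>S. g x = v}))"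
      by (intro sum.cong) auto
    ultimately show "(\<Sum>x\<in>{x\<in>S. g x = v}. 1 / real (card {y\<in>S. g y = g x})) = 1"
      using assms by simp
  qed
  finally show ?thesis by simp
qed

text \<open>A profile of a surjective colouring has entries in {1..n} summing to n, so it is
  determined by its first k - 1 entries.\<close>

lemma card_profiles_le:
  assumes k: "k \<ge> 1"
  shows "card (profile n k ` surj_colourings n k) \<le> n ^ (k - 1)"
proof -
  let ?V = "{v \<in> {0..<k} \<rightarrow>\<^sub>E {1..n}. sum v {0..<k} = n}"
  let ?truncate = "\<lambda>v. restrict v {0..<k-1}"
  have "profile n k ` surj_colourings n k \<subseteq> ?V"
    using surj_colouring_class_sizes(1,2) unfolding profile_def by fastforce
  then have "card (profile n k ` surj_colourings n k) \<le> card ?V"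
    by (rule card_mono[rotated]) (rule finite_subset[of _ "{0..<k} \<rightarrow>\<^sub>E {1..n}"], auto intro!: finite_PiE)
  also have "card ?V = card (?truncate ` ?V)"
  proof (rule card_image[symmetric], rule inj_onI)
    fix v w assume v: "v \<in> ?V" and w: "w \<in> ?V" and eq: "?truncate v = ?truncate w"
    have init: "v l = w l" if "l < k - 1" for l using fun_cong[OF eq, of l] that by simp
    have split: "{0..<k} = insert (k-1) {0..<k-1}" using k by auto
    have "sum v {0..<k-1} = sum w {0..<k-1}" using init by (intro sum.cong) auto
    then have "v (k-1) = w (k-1)" using v w unfolding split by simp
    then have "v l = w l" if "l \<in> {0..<k}" for l using init that by (cases "l = k - 1") auto
    then show "v = w" using v w by (intro PiE_ext) auto
  qed
  also have "\<dots> \<le> card ({0..<k-1} \<rightarrow>\<^sub>E {1..n})" by (intro card_mono finite_PiE) auto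
  also have "\<dots> = n ^ (k - 1)" by (simp add: card_PiE)
  finally show ?thesis .
qed

lemma deficient_pairs_subset_consistent_pairs:
  fixes ty :: "'a::field itself"
  assumes "m > 0" and "k \<ge> 1"
  shows "{(\<pi>, \<pi>'). \<pi> permutes {0..<m*n} \<and> \<pi>' permutes {0..<m*n} \<and> deficiency ty m n \<pi> \<pi>' \<ge> k}
           \<subseteq> (\<Union>\<sigma>\<in>surj_colourings n k. \<Union>\<tau>\<in>{0..<n} \<rightarrow>\<^sub>E {0..<k}. consistent_pairs m n \<sigma> \<tau>)"
proof (clarify)
  fix \<pi> \<pi>' assume \<pi>: "\<pi> permutes {0..<m*n}" and \<pi>': "\<pi>' permutes {0..<m*n}"
    and "deficiency ty m n \<pi> \<pi>' \<ge> k"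
  then obtain \<sigma> \<tau> where "\<sigma> \<in> surj_colourings n k" "\<tau> \<in> {0..<n} \<rightarrow>\<^sub>E {0..<k}"
    and "\<forall>x<m*n. \<sigma> (finv \<pi> x div m) = \<tau> (finv \<pi>' x div m)"
    using deficiency_imp_consistent_colouring[OF assms(1) _ _ _ assms(2)] by metis
  then show "(\<pi>, \<pi>') \<in> (\<Union>\<sigma>\<in>surj_colourings n k. \<Union>\<tau>\<in>{0..<n} \<rightarrow>\<^sub>E {0..<k}. consistent_pairs m n \<sigma> \<tau>)"
    using \<pi> \<pi>' unfolding consistent_pairs_def by blast
qed

text \<open>Combining the two lower bounds on C = |same_profile \<sigma>|: C \<ge> B for m - 2 of the factors,
  and C \<ge> G (the number of surjective colourings with the profile of \<sigma>) for the last one.\<close>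

lemma sum_card_consistent_pairs_le_profile_bound:
  fixes m n k :: nat and \<sigma> :: "nat \<Rightarrow> nat"
  defines "B \<equiv> (real n / 2) powr ((real k - 1) / 2)"
    and "G \<equiv> real (card {\<sigma>'\<in>surj_colourings n k. profile n k \<sigma>' = profile n k \<sigma>})"
  assumes m: "m \<ge> 2" and k: "k \<ge> 1" and \<sigma>: "\<sigma> \<in> surj_colourings n k"
  shows "real (\<Sum>\<tau>\<in>{0..<n} \<rightarrow>\<^sub>E {0..<k}. card (consistent_pairs m n \<sigma> \<tau>))
           \<le> real (fact (m*n))^2 * (1 / B) ^ (m - 2) / G"
proof -
  define C where "C = real (card (same_profile {0..<n} {0..<k} \<sigma>))"
  have B_le_C: "B \<le> C" unfolding B_def C_def by (rule card_same_profile_lower[OF \<sigma> k])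
  have "{\<sigma>'\<in>surj_colourings n k. profile n k \<sigma>' = profile n k \<sigma>} \<subseteq> same_profile {0..<n} {0..<k} \<sigma>"
    using profile_eq_imp_same_profile by blast
  then have G_le_C: "G \<le> C" unfolding G_def C_def by (intro of_nat_mono card_mono finite_same_profile) auto
  have "G \<ge> 1" using \<sigma> finite_subset[of _ "surj_colourings n k"]
    unfolding G_def by (simp add: Suc_le_eq card_gt_0_iff surj_colourings_def finite_PiE) blast
  have "B > 0" unfolding B_def using k surj_colouring_class_sizes(3)[OF \<sigma>] by simp
  have "real (\<Sum>\<tau>\<in>{0..<n} \<rightarrow>\<^sub>E {0..<k}. card (consistent_pairs m n \<sigma> \<tau>))
          \<le> real (fact (m*n))^2 / C ^ (m - 1)"
    using sum_card_consistent_pairs_le[of m \<sigma> n k] m \<sigma> unfolding C_def surj_colourings_def by simp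
  also have "\<dots> = real (fact (m*n))^2 * ((1 / C) ^ (m - 2) * (1 / C))"
    using m by (cases m) (auto simp: power_one_over field_simps simp flip: power_Suc)
  also have "\<dots> \<le> real (fact (m*n))^2 * ((1 / B) ^ (m - 2) * (1 / G))"
    using B_le_C G_le_C \<open>G \<ge> 1\<close> \<open>B > 0\<close>
    by (intro mult_left_mono mult_mono power_mono divide_left_mono) auto
  finally show ?thesis by simp
qed

lemma bound_powr_eq:
  fixes n k :: nat
  assumes "n \<ge> 1" and "k \<ge> 1"
  shows "(real n ^ 2 / (real n / 2) ^ (m - 2)) powr ((real k - 1) / 2)
           = real n ^ (k - 1) / ((real n / 2) powr ((real k - 1) / 2)) ^ (m - 2)"
proof -
  let ?e = "(real k - 1) / 2"
  have n: "real n > 0" using assms by simp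
  have "(real n ^ 2) powr ?e = (real n powr real 2) powr ?e" using n by (simp add: powr_realpow)
  also have "\<dots> = real n powr (real 2 * ?e)" by (rule powr_powr)
  also have "real 2 * ?e = real (k - 1)" using assms(2) by (simp add: of_nat_diff)
  also have "real n powr real (k - 1) = real n ^ (k - 1)" using n by (rule powr_realpow)
  finally have numerator: "(real n ^ 2) powr ?e = real n ^ (k - 1)" .
  have "((real n / 2) ^ (m - 2)) powr ?e = ((real n / 2) powr real (m - 2)) powr ?e"
    using n by (simp add: powr_realpow)
  also have "\<dots> = (real n / 2) powr (real (m - 2) * ?e)" by (rule powr_powr)
  also have "\<dots> = ((real n / 2) powr ?e) ^ (m - 2)" by (rule powr_power[symmetric]) (use n in simp)
  finally have denominator: "((real n / 2) ^ (m - 2)) powr ?e = ((real n / 2) powr ?e) ^ (m - 2)" .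
  show ?thesis unfolding powr_divide numerator denominator ..
qed

lemma finite_consistent_pairs: "finite (consistent_pairs m n \<sigma> \<tau>)"
  by (rule finite_subset[of _ "{\<pi>. \<pi> permutes {0..<m*n}} \<times> {\<pi>. \<pi> permutes {0..<m*n}}"])
    (auto simp: consistent_pairs_def finite_permutations)

lemma card_deficient_pairs_le:
  fixes ty :: "'a::field itself"
  assumes "m > 0" and "k \<ge> 1"
  shows "card {(\<pi>, \<pi>'). \<pi> permutes {0..<m*n} \<and> \<pi>' permutes {0..<m*n} \<and> deficiency ty m n \<pi> \<pi>' \<ge> k}
           \<le> (\<Sum>\<sigma>\<in>surj_colourings n k. \<Sum>\<tau>\<in>{0..<n} \<rightarrow>\<^sub>E {0..<k}. card (consistent_pairs m n \<sigma> \<tau>))"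
proof -
  let ?S = "surj_colourings n k"
  have finite: "finite ({0..<n} \<rightarrow>\<^sub>E {0..<k})" "finite ?S"
    by (auto simp: finite_PiE surj_colourings_def)
  have "finite (\<Union>\<sigma>\<in>?S. \<Union>\<tau>\<in>{0..<n} \<rightarrow>\<^sub>E {0..<k}. consistent_pairs m n \<sigma> \<tau>)"
    using finite by (simp add: finite_consistent_pairs)
  then have "card {(\<pi>, \<pi>'). \<pi> permutes {0..<m*n} \<and> \<pi>' permutes {0..<m*n} \<and> deficiency ty m n \<pi> \<pi>' \<ge> k}
          \<le> card (\<Union>\<sigma>\<in>?S. \<Union>\<tau>\<in>{0..<n} \<rightarrow>\<^sub>E {0..<k}. consistent_pairs m n \<sigma> \<tau>)"
    by (rule card_mono[OF _ deficient_pairs_subset_consistent_pairs]) (use assms in auto)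
  also have "\<dots> \<le> (\<Sum>\<sigma>\<in>?S. card (\<Union>\<tau>\<in>{0..<n} \<rightarrow>\<^sub>E {0..<k}. consistent_pairs m n \<sigma> \<tau>))"
    by (rule card_UN_le[OF finite(2)])
  also have "\<dots> \<le> (\<Sum>\<sigma>\<in>?S. \<Sum>\<tau>\<in>{0..<n} \<rightarrow>\<^sub>E {0..<k}. card (consistent_pairs m n \<sigma> \<tau>))"
    by (intro sum_mono card_UN_le[OF finite(1)])
  finally show ?thesis .
qed

theorem mainTheorem5:
  fixes ty :: "'a::{field,finite} itself"
  and n m k :: nat
  assumes "n \<ge> 1" and "m \<ge> 3" and "k \<ge> 1"
  shows "real (card {(\<pi>, \<pi>'). \<pi> permutes {0..<m*n} \<and> \<pi>' permutes {0..<m*n}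
                    \<and> deficiency ty m n \<pi> \<pi>' \<ge> k})
         / (real (fact (m*n)))^2
       \<le> (real n ^ 2 / (real n / 2) ^ (m - 2)) powr ((real k - 1) / 2)"
proof -
  let ?S = "surj_colourings n k"
  define B where "B = (real n / 2) powr ((real k - 1) / 2)"
  define G where "G \<sigma> = real (card {\<sigma>'\<in>?S. profile n k \<sigma>' = profile n k \<sigma>})" for \<sigma>
  define F where "F = real (fact (m*n))"
  have "finite ?S" by (auto simp: finite_PiE surj_colourings_def)
  have "real (card {(\<pi>, \<pi>'). \<pi> permutes {0..<m*n} \<and> \<pi>' permutes {0..<m*n} \<and> deficiency ty m n \<pi> \<pi>' \<ge> k})
          \<le> real (\<Sum>\<sigma>\<in>?S. \<Sum>\<tau>\<in>{0..<n} \<rightarrow>\<^sub>E {0..<k}. card (consistent_pairs m n \<sigma> \<tau>))"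
    by (intro of_nat_mono card_deficient_pairs_le) (use assms in auto)
  also have "\<dots> = (\<Sum>\<sigma>\<in>?S. real (\<Sum>\<tau>\<in>{0..<n} \<rightarrow>\<^sub>E {0..<k}. card (consistent_pairs m n \<sigma> \<tau>)))"
    by (rule of_nat_sum)
  also have "\<dots> \<le> (\<Sum>\<sigma>\<in>?S. F^2 * (1 / B) ^ (m - 2) / G \<sigma>)"
    using sum_card_consistent_pairs_le_profile_bound[of m k] assms
    unfolding B_def G_def F_def by (intro sum_mono) simp
  also have "\<dots> = F^2 * (1 / B) ^ (m - 2) * real (card (profile n k ` ?S))"
    unfolding G_def sum_inverse_card_fibres[OF \<open>finite ?S\<close>, symmetric] by (simp add: sum_distrib_left)
  also have "\<dots> \<le> F^2 * (1 / B) ^ (m - 2) * real n ^ (k - 1)"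
  proof -
    have "real (card (profile n k ` ?S)) \<le> real n ^ (k - 1)"
      using card_profiles_le[OF assms(3), of n] by (metis of_nat_le_iff of_nat_power)
    then show ?thesis unfolding B_def by (intro mult_left_mono) auto
  qed
  also have "\<dots> = (real n ^ (k - 1) / B ^ (m - 2)) * F^2" by (simp add: power_one_over)
  finally show ?thesis
    unfolding bound_powr_eq[OF assms(1,3)] B_def[symmetric] F_def[symmetric]
    by (simp add: pos_divide_le_eq F_def)
qed

end
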